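(* Let $d\ge1$ and let $G$ be obtained from an $\mathcal{R}_d$-independent graph by adding at most $2$ edges. Then $G$ is $\mathcal{R}_{d+1}$-independent.
   Context: For a graph $G=(V,E)$ and a generic $p:V\to\mathbb{R}^d$ (coordinates algebraically independent over $\mathbb{Q}$), the rigidity matrix has a row for each $uv\in E$ with $p(u)-p(v)$ in the $d$ columns of $u$, $p(v)-p(u)$ in those of $v$, zeros elsewhere; $\mathcal{R}_d$ is its row matroid, with rank $r_d$. A graph with edge set $F$ is $\mathcal{R}_d$-independent if $r_d(F)=|F|$. Graphs are simple; added edges join existing non-adjacent vertices. *)

theory Defs
  imports Complex_Main
begin

definition simple_graph :: "'v set \<Rightarrow> 'v set set \<Rightarrow> bool" where
  "simple_graph V E \<longleftrightarrow> finite V \<and> (\<forall>e\<in>E. e \<subseteq> V \<and> card e = 2)"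

text \<open>A polynomial is a finitely supported coefficient function on monomials
  (exponent vectors supported in I).\<close>
definition alg_indep_over_rat :: "'i set \<Rightarrow> ('i \<Rightarrow> real) \<Rightarrow> bool" where
  "alg_indep_over_rat I x \<longleftrightarrow>
     (\<forall>c :: ('i \<Rightarrow> nat) \<Rightarrow> rat.
        finite {m. c m \<noteq> 0} \<longrightarrow>
        (\<forall>m. c m \<noteq> 0 \<longrightarrow> (\<forall>i. i \<notin> I \<longrightarrow> m i = 0)) \<longrightarrow>
        (\<Sum>m\<in>{m. c m \<noteq> 0}. of_rat (c m) * (\<Prod>i\<in>I. x i ^ m i)) = 0 \<longrightarrow>
        (\<forall>m. c m = 0))"

text \<open>A placement p of V in R^d (coordinate k of vertex v is p v k, k < d) is generic
  if its coordinates are algebraically independent over Q.\<close>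
definition generic :: "nat \<Rightarrow> 'v set \<Rightarrow> ('v \<Rightarrow> nat \<Rightarrow> real) \<Rightarrow> bool" where
  "generic d V p \<longleftrightarrow> alg_indep_over_rat (V \<times> {..<d}) (\<lambda>(v, k). p v k)"

text \<open>Row of the rigidity matrix for edge e = {u,w}: entry at column (x,k) is
  p x k - p y k where y is the other endpoint (x in e, k < d), and 0 otherwise.
  For x in e the sum over y in e gives exactly p x k - p (other) k.\<close>
definition rig_row :: "nat \<Rightarrow> ('v \<Rightarrow> nat \<Rightarrow> real) \<Rightarrow> 'v set \<Rightarrow> 'v \<times> nat \<Rightarrow> real" where
  "rig_row d p e = (\<lambda>(x, k). if x \<in> e \<and> k < d then (\<Sum>y\<in>e. p x k - p y k) else 0)"

definition rows_lin_indep :: "nat \<Rightarrow> ('v \<Rightarrow> nat \<Rightarrow> real) \<Rightarrow> 'v set set \<Rightarrow> bool" where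
  "rows_lin_indep d p F \<longleftrightarrow>
     (\<forall>c :: 'v set \<Rightarrow> real. (\<forall>col. (\<Sum>e\<in>F. c e * rig_row d p e col) = 0) \<longrightarrow> (\<forall>e\<in>F. c e = 0))"

text \<open>R_d-independence of a graph (V,F): the rigidity matrix rows at a generic
  placement are independent. (Independent of the choice of generic p; we quantify
  over all generic placements.)\<close>
definition rigidity_indep :: "nat \<Rightarrow> 'v set \<Rightarrow> 'v set set \<Rightarrow> bool" where
  "rigidity_indep d V F \<longleftrightarrow> (\<forall>p. generic d V p \<longrightarrow> rows_lin_indep d p F)"

end

theory Submission
  imports Defs "Jordan_Normal_Form.Determinant"
begin

text \<open>
  Independence of a fixed edge set at a placement p means that the Gram determinant of its
  rigidity rows is nonzero; this determinant is a polynomial with rational coefficients in the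
  coordinates of p, so independence at a single placement in R^(d+1) implies independence at
  every generic one. Given a generic q, its first d coordinates are generic, so E is independent
  there, and we keep them and use the indicator of a vertex set U as last coordinate.

  A dependency c at such a lifted placement is a stress of E \<union> A in R^d; as E is
  independent, a stress is determined by its values on A. The last coordinate at a vertex
  x \<notin> U says that the coefficients of the edges from x to U sum to zero. If all added edges
  share a vertex u, lifting {u} forces c = 0. For two disjoint added edges, either some endpoint
  works alone, or for each added edge there is a stress vanishing at both of its endpoints and
  normalised on A; these two stresses show that lifting one endpoint of each edge works.
\<close>

section \<open>Polynomial functions with rational coefficients\<close>

definition eval_terms :: "'i set \<Rightarrow> (rat \<times> ('i \<Rightarrow> nat)) list \<Rightarrow> ('i \<Rightarrow> real) \<Rightarrow> real" where
  "eval_terms I L y = (\<Sum>(r, m)\<leftarrow>L. of_rat r * (\<Prod>i\<in>I. y i ^ m i))"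

definition rat_polyfun :: "'i set \<Rightarrow> (('i \<Rightarrow> real) \<Rightarrow> real) \<Rightarrow> bool" where
  "rat_polyfun I f \<longleftrightarrow>
     (\<exists>L. (\<forall>(r, m)\<in>set L. \<forall>i. i \<notin> I \<longrightarrow> m i = 0) \<and> (\<forall>y. f y = eval_terms I L y))"

definition term_coeff :: "(rat \<times> 'a) list \<Rightarrow> 'a \<Rightarrow> rat" where
  "term_coeff L m = (\<Sum>(r, m')\<leftarrow>L. if m' = m then r else 0)"

lemma term_coeff_eq_0: "m \<notin> snd ` set L \<Longrightarrow> term_coeff L m = 0"
  by (induction L) (auto simp: term_coeff_def)

lemma sum_list_terms_eq_sum_term_coeff:
  "(\<Sum>(r, m)\<leftarrow>L. of_rat r * (g m :: real)) = (\<Sum>m\<in>snd ` set L. of_rat (term_coeff L m) * g m)"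
proof (induction L)
  case Nil
  then show ?case by (simp add: term_coeff_def)
next
  case (Cons t L)
  obtain r0 m0 where t: "t = (r0, m0)" by force
  define M where "M = insert m0 (snd ` set L)"
  have coeff_Cons: "of_rat (term_coeff (t # L) m) * g m
      = (if m = m0 then of_rat r0 * g m else 0) + of_rat (term_coeff L m) * g m" for m
    unfolding term_coeff_def t by (simp add: of_rat_add distrib_right)
  have "(\<Sum>m\<in>M. of_rat (term_coeff (t # L) m) * g m)
      = (\<Sum>m\<in>M. if m = m0 then of_rat r0 * g m else 0) + (\<Sum>m\<in>M. of_rat (term_coeff L m) * g m)"
    unfolding coeff_Cons by (rule sum.distrib)
  also have "(\<Sum>m\<in>M. if m = m0 then of_rat r0 * g m else 0) = of_rat r0 * g m0"
    by (simp add: M_def sum.delta')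
  also have "(\<Sum>m\<in>M. of_rat (term_coeff L m) * g m) = (\<Sum>m\<in>snd ` set L. of_rat (term_coeff L m) * g m)"
    unfolding M_def by (cases "m0 \<in> snd ` set L") (auto simp: term_coeff_eq_0 insert_absorb)
  finally have "(\<Sum>m\<in>M. of_rat (term_coeff (t # L) m) * g m)
      = of_rat r0 * g m0 + (\<Sum>m\<in>snd ` set L. of_rat (term_coeff L m) * g m)" .
  moreover have "snd ` set (t # L) = M"
    by (simp add: t M_def)
  ultimately show ?case
    using Cons by (simp add: t)
qed

lemma rat_polyfun_zero_if_zero_at_alg_indep:
  assumes "rat_polyfun I f" "alg_indep_over_rat I x" "f x = 0"
  shows "f y = 0"
proof -
  obtain L where L_vars: "\<forall>(r, m)\<in>set L. \<forall>i. i \<notin> I \<longrightarrow> m i = 0"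
    and f_eq: "\<And>y. f y = eval_terms I L y"
    using assms(1) unfolding rat_polyfun_def by blast
  define c where "c = term_coeff L"
  have supp: "{m. c m \<noteq> 0} \<subseteq> snd ` set L"
    using term_coeff_eq_0[of _ L] unfolding c_def by auto
  have f_coeffs: "f z = (\<Sum>m\<in>{m. c m \<noteq> 0}. of_rat (c m) * (\<Prod>i\<in>I. z i ^ m i))" for z
  proof -
    have "f z = (\<Sum>m\<in>snd ` set L. of_rat (c m) * (\<Prod>i\<in>I. z i ^ m i))"
      unfolding f_eq eval_terms_def c_def by (rule sum_list_terms_eq_sum_term_coeff)
    also have "\<dots> = (\<Sum>m\<in>{m. c m \<noteq> 0}. of_rat (c m) * (\<Prod>i\<in>I. z i ^ m i))"
      by (rule sum.mono_neutral_right) (use supp in auto)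
    finally show ?thesis .
  qed
  have vars: "\<forall>m. c m \<noteq> 0 \<longrightarrow> (\<forall>i. i \<notin> I \<longrightarrow> m i = 0)"
  proof (intro allI impI)
    fix m i
    assume "c m \<noteq> 0" "i \<notin> I"
    then obtain r where "(r, m) \<in> set L"
      using supp by force
    then show "m i = 0"
      using L_vars \<open>i \<notin> I\<close> by fastforce
  qed
  have fin: "finite {m. c m \<noteq> 0}"
    by (rule finite_subset[OF supp]) simp
  have "(\<Sum>m\<in>{m. c m \<noteq> 0}. of_rat (c m) * (\<Prod>i\<in>I. x i ^ m i)) = 0"
    using assms(3) f_coeffs[of x] by simp
  then have "\<forall>m. c m = 0"
    using assms(2) fin vars unfolding alg_indep_over_rat_def by blast
  then show ?thesis
    using f_coeffs[of y] by simp
qed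

lemma rat_polyfun_const: "rat_polyfun I (\<lambda>y. of_rat r)"
  unfolding rat_polyfun_def eval_terms_def by (rule exI[of _ "[(r, \<lambda>_. 0)]"]) simp

lemma rat_polyfun_var:
  assumes "finite I" "i \<in> I"
  shows "rat_polyfun I (\<lambda>y. y i)"
  unfolding rat_polyfun_def
proof (intro exI[of _ "[(1, \<lambda>j. if j = i then 1 else 0)]"] conjI allI)
  fix y :: "'a \<Rightarrow> real"
  have "(\<Prod>j\<in>I. y j ^ (if j = i then 1 else 0)) = (\<Prod>j\<in>I. if j = i then y j else 1)"
    by (rule prod.cong) auto
  with assms show "y i = eval_terms I [(1, \<lambda>j. if j = i then 1 else 0)] y"
    by (simp add: eval_terms_def prod.delta)
qed (use assms in auto)

lemma rat_polyfun_add: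
  assumes "rat_polyfun I f" "rat_polyfun I g"
  shows "rat_polyfun I (\<lambda>y. f y + g y)"
proof -
  obtain L1 where L1: "\<forall>(r, m)\<in>set L1. \<forall>i. i \<notin> I \<longrightarrow> m i = 0" "\<forall>y. f y = eval_terms I L1 y"
    using assms(1) unfolding rat_polyfun_def by blast
  obtain L2 where L2: "\<forall>(r, m)\<in>set L2. \<forall>i. i \<notin> I \<longrightarrow> m i = 0" "\<forall>y. g y = eval_terms I L2 y"
    using assms(2) unfolding rat_polyfun_def by blast
  show ?thesis
    unfolding rat_polyfun_def
    by (intro exI[of _ "L1 @ L2"]) (use L1 L2 in \<open>auto simp: eval_terms_def\<close>)
qed

definition mult_terms :: "(rat \<times> ('i \<Rightarrow> nat)) list \<Rightarrow> (rat \<times> ('i \<Rightarrow> nat)) list \<Rightarrow> (rat \<times> ('i \<Rightarrow> nat)) list" where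
  "mult_terms L1 L2 = concat (map (\<lambda>(r1, m1). map (\<lambda>(r2, m2). (r1 * r2, \<lambda>i. m1 i + m2 i)) L2) L1)"

lemma eval_terms_mult_terms:
  "eval_terms I (mult_terms L1 L2) y = eval_terms I L1 y * eval_terms I L2 y"
proof (induction L1)
  case Nil
  then show ?case by (simp add: eval_terms_def mult_terms_def)
next
  case (Cons t L1)
  obtain r1 m1 where t: "t = (r1, m1)" by force
  have "eval_terms I (map (\<lambda>(r2, m2). (r1 * r2, \<lambda>i. m1 i + m2 i)) L2) y
      = of_rat r1 * (\<Prod>i\<in>I. y i ^ m1 i) * eval_terms I L2 y"
    unfolding eval_terms_def
    by (induction L2) (auto simp: of_rat_mult power_add prod.distrib algebra_simps)
  with Cons show ?case
    by (simp add: t eval_terms_def mult_terms_def algebra_simps)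
qed

lemma rat_polyfun_mult:
  assumes "rat_polyfun I f" "rat_polyfun I g"
  shows "rat_polyfun I (\<lambda>y. f y * g y)"
proof -
  obtain L1 where L1: "\<forall>(r, m)\<in>set L1. \<forall>i. i \<notin> I \<longrightarrow> m i = 0" "\<forall>y. f y = eval_terms I L1 y"
    using assms(1) unfolding rat_polyfun_def by blast
  obtain L2 where L2: "\<forall>(r, m)\<in>set L2. \<forall>i. i \<notin> I \<longrightarrow> m i = 0" "\<forall>y. g y = eval_terms I L2 y"
    using assms(2) unfolding rat_polyfun_def by blast
  show ?thesis
    unfolding rat_polyfun_def
  proof (intro exI[of _ "mult_terms L1 L2"] conjI allI)
    show "\<forall>(r, m)\<in>set (mult_terms L1 L2). \<forall>i. i \<notin> I \<longrightarrow> m i = 0"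
      using L1(1) L2(1) by (fastforce simp: mult_terms_def)
  qed (use L1(2) L2(2) in \<open>simp add: eval_terms_mult_terms\<close>)
qed

lemma rat_polyfun_diff:
  assumes "rat_polyfun I f" "rat_polyfun I g"
  shows "rat_polyfun I (\<lambda>y. f y - g y)"
  using rat_polyfun_add[OF assms(1) rat_polyfun_mult[OF rat_polyfun_const[of I "-1"] assms(2)]]
  by (simp add: of_rat_minus)

lemma rat_polyfun_sum:
  assumes "finite S" "\<And>s. s \<in> S \<Longrightarrow> rat_polyfun I (f s)"
  shows "rat_polyfun I (\<lambda>y. \<Sum>s\<in>S. f s y)"
  using assms
  by (induction S rule: finite_induct) (auto intro: rat_polyfun_add rat_polyfun_const[of I 0, simplified])

lemma rat_polyfun_prod:
  assumes "finite S" "\<And>s. s \<in> S \<Longrightarrow> rat_polyfun I (f s)"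
  shows "rat_polyfun I (\<lambda>y. \<Prod>s\<in>S. f s y)"
  using assms
  by (induction S rule: finite_induct) (auto intro: rat_polyfun_mult rat_polyfun_const[of I 1, simplified])

lemma rat_polyfun_det:
  assumes "\<And>i j. i < n \<Longrightarrow> j < n \<Longrightarrow> rat_polyfun I (a i j)"
  shows "rat_polyfun I (\<lambda>y. det (mat n n (\<lambda>(i, j). a i j y)))"
proof -
  have det_expand: "det (mat n n (\<lambda>(i, j). a i j y))
      = (\<Sum>p\<in>{p. p permutes {0..<n}}. of_int (sign p) * (\<Prod>i\<in>{0..<n}. a i (p i) y))" for y
  proof -
    have "p permutes {0..<n} \<Longrightarrow> i \<in> {0..<n} \<Longrightarrow> p i < n" for p i
      using permutes_in_image by fastforce
    then show ?thesis
      by (subst det_def'[of _ n]) (auto intro!: sum.cong prod.cong)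
  qed
  have "rat_polyfun I (\<lambda>y. \<Sum>p\<in>{p. p permutes {0..<n}}. of_int (sign p) * (\<Prod>i\<in>{0..<n}. a i (p i) y))"
  proof (intro rat_polyfun_sum rat_polyfun_mult rat_polyfun_prod)
    fix p i
    assume "p \<in> {p. p permutes {0..<n}}" "i \<in> {0..<n}"
    then show "rat_polyfun I (a i (p i))"
      using assms permutes_in_image by fastforce
  qed (auto simp: finite_permutations intro: rat_polyfun_const[of I "of_int _", simplified])
  then show ?thesis
    by (simp only: det_expand)
qed

lemma alg_indep_over_rat_subset:
  assumes "finite I" "J \<subseteq> I" "alg_indep_over_rat I x"
  shows "alg_indep_over_rat J x"
  unfolding alg_indep_over_rat_def
proof (rule allI, intro impI)
  fix c :: "('a \<Rightarrow> nat) \<Rightarrow> rat"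
  assume fin: "finite {m. c m \<noteq> 0}" and vars: "\<forall>m. c m \<noteq> 0 \<longrightarrow> (\<forall>i. i \<notin> J \<longrightarrow> m i = 0)"
    and zero: "(\<Sum>m\<in>{m. c m \<noteq> 0}. of_rat (c m) * (\<Prod>i\<in>J. x i ^ m i)) = 0"
  have "(\<Prod>i\<in>I. x i ^ m i) = (\<Prod>i\<in>J. x i ^ m i)" if "m \<in> {m. c m \<noteq> 0}" for m
    using assms(1,2) vars that by (intro prod.mono_neutral_right) auto
  then have "(\<Sum>m\<in>{m. c m \<noteq> 0}. of_rat (c m) * (\<Prod>i\<in>I. x i ^ m i)) = 0"
    using zero by (metis (no_types, lifting) sum.cong)
  moreover have "\<forall>m. c m \<noteq> 0 \<longrightarrow> (\<forall>i. i \<notin> I \<longrightarrow> m i = 0)"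
    using vars assms(2) by blast
  ultimately show "\<forall>m. c m = 0"
    using assms(3) fin unfolding alg_indep_over_rat_def by blast
qed

lemma generic_Suc_imp_generic: "finite V \<Longrightarrow> generic (Suc d) V q \<Longrightarrow> generic d V q"
  unfolding generic_def by (rule alg_indep_over_rat_subset) auto

section \<open>Gram matrices\<close>

definition gram_mat :: "nat \<Rightarrow> 'c set \<Rightarrow> (nat \<Rightarrow> 'c \<Rightarrow> real) \<Rightarrow> real mat" where
  "gram_mat n C r = mat n n (\<lambda>(i, j). \<Sum>c\<in>C. r i c * r j c)"

lemma gram_mat_mult_vec_nth:
  assumes "i < n"
  shows "(gram_mat n C r *\<^sub>v vec n v) $ i = (\<Sum>c\<in>C. r i c * (\<Sum>j<n. v j * r j c))"
proof -
  have "(gram_mat n C r *\<^sub>v vec n v) $ i = (\<Sum>j<n. \<Sum>c\<in>C. r i c * (v j * r j c))"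
    using assms by (simp add: gram_mat_def scalar_prod_def atLeast0LessThan sum_distrib_left sum_distrib_right mult_ac)
  also have "\<dots> = (\<Sum>c\<in>C. r i c * (\<Sum>j<n. v j * r j c))"
    by (subst sum.swap) (simp add: sum_distrib_left)
  finally show ?thesis .
qed

lemma gram_mat_kernel_iff:
  assumes "finite C" and supp: "\<And>i c. i < n \<Longrightarrow> c \<notin> C \<Longrightarrow> r i c = 0"
  shows "gram_mat n C r *\<^sub>v vec n v = 0\<^sub>v n \<longleftrightarrow> (\<forall>c. (\<Sum>i<n. v i * r i c) = 0)"
proof -
  define s where "s c = (\<Sum>i<n. v i * r i c)" for c
  have G_nth: "(gram_mat n C r *\<^sub>v vec n v) $ i = (\<Sum>c\<in>C. r i c * s c)" if "i < n" for i
    using gram_mat_mult_vec_nth[OF that] by (simp add: s_def)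
  have "gram_mat n C r *\<^sub>v vec n v = 0\<^sub>v n \<longleftrightarrow> (\<forall>c. s c = 0)"
  proof
    assume kernel: "gram_mat n C r *\<^sub>v vec n v = 0\<^sub>v n"
    \<comment> \<open>the quadratic form of a Gram matrix is a sum of squares\<close>
    have "s c * s c = (\<Sum>i<n. v i * (r i c * s c))" for c
    proof -
      have "s c * s c = (\<Sum>i<n. v i * r i c) * s c"
        by (simp only: s_def)
      then show ?thesis
        by (simp add: sum_distrib_right mult.assoc)
    qed
    then have "(\<Sum>c\<in>C. s c * s c) = (\<Sum>c\<in>C. \<Sum>i<n. v i * (r i c * s c))"
      by simp
    also have "\<dots> = (\<Sum>i<n. v i * (gram_mat n C r *\<^sub>v vec n v) $ i)"
      by (subst sum.swap) (simp add: G_nth sum_distrib_left)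
    also have "\<dots> = 0"
      using kernel by simp
    finally have squares: "\<forall>c\<in>C. s c * s c = 0"
      using sum_nonneg_eq_0_iff[OF assms(1), of "\<lambda>c. s c * s c"] by simp
    show "\<forall>c. s c = 0"
    proof
      fix c
      show "s c = 0"
      proof (cases "c \<in> C")
        case True
        then show ?thesis
          using squares by simp
      next
        case False
        then show ?thesis
          unfolding s_def by (intro sum.neutral) (simp add: supp)
      qed
    qed
  next
    assume "\<forall>c. s c = 0"
    then show "gram_mat n C r *\<^sub>v vec n v = 0\<^sub>v n"
      by (intro eq_vecI) (simp_all add: G_nth, simp add: gram_mat_def)
  qed
  then show ?thesis
    unfolding s_def .
qed

lemma det_gram_mat_ne_0_iff:
  assumes "finite C" and "\<And>i c. i < n \<Longrightarrow> c \<notin> C \<Longrightarrow> r i c = 0"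
  shows "det (gram_mat n C r) \<noteq> 0 \<longleftrightarrow> (\<forall>v. (\<forall>c. (\<Sum>i<n. v i * r i c) = 0) \<longrightarrow> (\<forall>i<n. v i = 0))"
proof -
  have "det (gram_mat n C r) = 0 \<longleftrightarrow> (\<exists>w\<in>carrier_vec n. w \<noteq> 0\<^sub>v n \<and> gram_mat n C r *\<^sub>v w = 0\<^sub>v n)"
    by (subst det_0_iff_vec_prod_zero[of _ n]) (auto simp: gram_mat_def)
  also have "\<dots> \<longleftrightarrow> (\<exists>v. vec n v \<noteq> 0\<^sub>v n \<and> gram_mat n C r *\<^sub>v vec n v = 0\<^sub>v n)"
  proof
    assume "\<exists>w\<in>carrier_vec n. w \<noteq> 0\<^sub>v n \<and> gram_mat n C r *\<^sub>v w = 0\<^sub>v n"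
    then obtain w where "w \<in> carrier_vec n" "w \<noteq> 0\<^sub>v n \<and> gram_mat n C r *\<^sub>v w = 0\<^sub>v n"
      by blast
    moreover from this(1) have "w = vec n (\<lambda>i. w $ i)"
      by (intro eq_vecI) auto
    ultimately show "\<exists>v. vec n v \<noteq> 0\<^sub>v n \<and> gram_mat n C r *\<^sub>v vec n v = 0\<^sub>v n"
      by metis
  qed auto
  also have "\<dots> \<longleftrightarrow> (\<exists>v. (\<exists>i<n. v i \<noteq> 0) \<and> (\<forall>c. (\<Sum>i<n. v i * r i c) = 0))"
  proof -
    have "vec n v \<noteq> 0\<^sub>v n \<longleftrightarrow> (\<exists>i<n. v i \<noteq> 0)" for v :: "nat \<Rightarrow> real"
      by (auto simp: vec_eq_iff)
    with gram_mat_kernel_iff[OF assms] show ?thesis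
      by presburger
  qed
  finally show ?thesis
    by blast
qed

section \<open>Independence at generic placements\<close>

lemma lin_indep_set_iff_lin_indep_nth:
  fixes g :: "'a \<Rightarrow> 'c \<Rightarrow> real"
  assumes "distinct fs"
  shows "(\<forall>c. (\<forall>x. (\<Sum>e\<in>set fs. c e * g e x) = 0) \<longrightarrow> (\<forall>e\<in>set fs. c e = 0)) \<longleftrightarrow>
    (\<forall>v. (\<forall>x. (\<Sum>i<length fs. v i * g (fs ! i) x) = 0) \<longrightarrow> (\<forall>i<length fs. v i = 0))"
proof -
  have bij: "bij_betw ((!) fs) {..<length fs} (set fs)"
    using bij_betw_nth[OF assms] by simp
  have reindex: "(\<Sum>e\<in>set fs. c e * g e x) = (\<Sum>i<length fs. c (fs ! i) * g (fs ! i) x)" for c x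
    using sum.reindex_bij_betw[OF bij, of "\<lambda>e. c e * g e x"] by simp
  define idx where "idx = inv_into {..<length fs} ((!) fs)"
  have idx: "idx (fs ! i) = i" if "i < length fs" for i
    using bij that by (simp add: idx_def bij_betw_def)
  show ?thesis
  proof
    assume indep_set: "\<forall>c. (\<forall>x. (\<Sum>e\<in>set fs. c e * g e x) = 0) \<longrightarrow> (\<forall>e\<in>set fs. c e = 0)"
    show "\<forall>v. (\<forall>x. (\<Sum>i<length fs. v i * g (fs ! i) x) = 0) \<longrightarrow> (\<forall>i<length fs. v i = 0)"
    proof (intro allI impI)
      fix v i
      assume dep: "\<forall>x. (\<Sum>i<length fs. v i * g (fs ! i) x) = 0" and i: "i < length fs"
      have "(\<Sum>e\<in>set fs. v (idx e) * g e x) = (\<Sum>i<length fs. v i * g (fs ! i) x)" for x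
        unfolding reindex by (intro sum.cong) (simp_all add: idx)
      with dep have "\<forall>x. (\<Sum>e\<in>set fs. v (idx e) * g e x) = 0"
        by simp
      then show "v i = 0"
        using indep_set[rule_format, of "\<lambda>e. v (idx e)" "fs ! i"] i idx by simp
    qed
  next
    assume "\<forall>v. (\<forall>x. (\<Sum>i<length fs. v i * g (fs ! i) x) = 0) \<longrightarrow> (\<forall>i<length fs. v i = 0)"
    then show "\<forall>c. (\<forall>x. (\<Sum>e\<in>set fs. c e * g e x) = 0) \<longrightarrow> (\<forall>e\<in>set fs. c e = 0)"
      unfolding reindex by (metis in_set_conv_nth)
  qed
qed

lemma rig_row_eq_0_outside: "e \<subseteq> V \<Longrightarrow> vk \<notin> V \<times> {..<D} \<Longrightarrow> rig_row D p e vk = 0"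
  by (cases vk) (auto simp: rig_row_def)

lemma rows_lin_indep_iff_det_gram_mat:
  assumes "finite V" "distinct fs" "\<forall>e\<in>set fs. e \<subseteq> V"
  shows "rows_lin_indep D p (set fs) \<longleftrightarrow>
    det (gram_mat (length fs) (V \<times> {..<D}) (\<lambda>i. rig_row D p (fs ! i))) \<noteq> 0"
proof -
  have "\<And>i vk. i < length fs \<Longrightarrow> vk \<notin> V \<times> {..<D} \<Longrightarrow> rig_row D p (fs ! i) vk = 0"
    using assms(3) by (intro rig_row_eq_0_outside) auto
  then show ?thesis
    unfolding rows_lin_indep_def lin_indep_set_iff_lin_indep_nth[OF assms(2)]
    using det_gram_mat_ne_0_iff[of "V \<times> {..<D}"] assms(1) by simp
qed

lemma rat_polyfun_rig_row:
  assumes "finite V" "e \<subseteq> V"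
  shows "rat_polyfun (V \<times> {..<D}) (\<lambda>y. rig_row D (\<lambda>v k. y (v, k)) e vk)"
proof -
  obtain x k where vk: "vk = (x, k)"
    by force
  show ?thesis
  proof (cases "x \<in> e \<and> k < D")
    case True
    have "rat_polyfun (V \<times> {..<D}) (\<lambda>y. \<Sum>w\<in>e. y (x, k) - y (w, k))"
      using True assms finite_subset by (intro rat_polyfun_sum rat_polyfun_diff rat_polyfun_var) auto
    then show ?thesis
      using True by (simp add: rig_row_def vk)
  next
    case False
    then have "rig_row D (\<lambda>v k. y (v, k)) e vk = 0" for y
      by (auto simp: rig_row_def vk)
    then show ?thesis
      using rat_polyfun_const[of _ 0] by simp
  qed
qed

lemma rows_lin_indep_at_generic:
  assumes "finite V" "finite F" "\<forall>e\<in>F. e \<subseteq> V"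
    and "rows_lin_indep D p F" "generic D V q"
  shows "rows_lin_indep D q F"
proof -
  obtain fs where fs: "distinct fs" "set fs = F"
    using finite_distinct_list[OF assms(2)] by blast
  define gram_det where "gram_det y =
    det (gram_mat (length fs) (V \<times> {..<D}) (\<lambda>i. rig_row D (\<lambda>v k. y (v, k)) (fs ! i)))" for y
  have "rat_polyfun (V \<times> {..<D}) gram_det"
    unfolding gram_det_def gram_mat_def
    using assms(1,3) fs(2) by (intro rat_polyfun_det rat_polyfun_sum rat_polyfun_mult rat_polyfun_rig_row) auto
  moreover have "gram_det (\<lambda>(v, k). p v k) \<noteq> 0"
    using rows_lin_indep_iff_det_gram_mat[OF assms(1) fs(1)] assms(3,4) fs(2)
    by (simp add: gram_det_def)
  ultimately have "gram_det (\<lambda>(v, k). q v k) \<noteq> 0"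
    using assms(5) rat_polyfun_zero_if_zero_at_alg_indep unfolding generic_def by blast
  then show ?thesis
    using rows_lin_indep_iff_det_gram_mat[OF assms(1) fs(1)] assms(3) fs(2)
    by (simp add: gram_det_def)
qed

section \<open>Lifting vertices into an extra dimension\<close>

lemma card_2_obtain_other:
  assumes "card e = 2" "x \<in> e"
  obtains y where "e = {x, y}" "y \<noteq> x"
proof -
  obtain a b where ab: "e = {a, b}" "a \<noteq> b"
    using assms(1) unfolding card_2_iff by blast
  show ?thesis
  proof (cases "x = a")
    case True
    show ?thesis
      by (rule that[of b]) (use ab True in auto)
  next
    case False
    with ab assms(2) have "x = b" by blast
    show ?thesis
      by (rule that[of a]) (use ab \<open>x = b\<close> in auto)
  qed
qed

definition lift_placement :: "nat \<Rightarrow> ('v \<Rightarrow> nat \<Rightarrow> real) \<Rightarrow> 'v set \<Rightarrow> 'v \<Rightarrow> nat \<Rightarrow> real" where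
  "lift_placement d q U v k = (if k = d then (if v \<in> U then 1 else 0) else q v k)"

lemma rig_row_lift_placement:
  "k \<noteq> d \<Longrightarrow> rig_row (Suc d) (lift_placement d q U) e (x, k) = rig_row d q e (x, k)"
  by (simp add: rig_row_def lift_placement_def)

lemma rig_row_lift_placement_top:
  assumes "card e = 2" "finite U" "x \<notin> U"
  shows "rig_row (Suc d) (lift_placement d q U) e (x, d) = - (\<Sum>u\<in>U. if e = {x, u} then 1 else 0)"
proof (cases "x \<in> e")
  case True
  obtain y where e: "e = {x, y}" "y \<noteq> x"
    using card_2_obtain_other[OF assms(1) True] .
  have sum_eq: "(\<Sum>u\<in>U. if e = {x, u} then 1 else 0 :: real) = (\<Sum>u\<in>U. if u = y then 1 else 0)"
  proof (rule sum.cong)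
    fix u
    assume "u \<in> U"
    with e assms(3) have "e = {x, u} \<longleftrightarrow> u = y"
      by (auto simp: doubleton_eq_iff)
    then show "(if e = {x, u} then 1 else 0 :: real) = (if u = y then 1 else 0)"
      by simp
  qed simp
  have "rig_row (Suc d) (lift_placement d q U) e (x, d)
      = (\<Sum>w\<in>{x, y}. lift_placement d q U x d - lift_placement d q U w d)"
    using True by (simp add: rig_row_def e(1))
  also have "\<dots> = - lift_placement d q U y d"
    using e(2) assms(3) by (simp add: lift_placement_def)
  also have "\<dots> = - (\<Sum>u\<in>U. if u = y then 1 else 0)"
    using assms(2) by (simp add: lift_placement_def)
  finally show ?thesis
    using sum_eq by simp
next
  case False
  then have "e \<noteq> {x, u}" for u
    by auto
  with False show ?thesis
    by (simp add: rig_row_def)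
qed

locale rigidity_extension =
  fixes d :: nat and V :: "'v set" and E A :: "'v set set" and q :: "'v \<Rightarrow> nat \<Rightarrow> real"
  assumes finite_V: "finite V"
    and edges: "\<forall>e\<in>E \<union> A. e \<subseteq> V \<and> card e = 2"
    and disjoint: "A \<inter> E = {}"
    and finite_A: "finite A"
    and indep_E: "rows_lin_indep d q E"
begin

definition stress :: "('v set \<Rightarrow> real) \<Rightarrow> bool" where
  "stress w \<longleftrightarrow> (\<forall>vk. (\<Sum>e\<in>E \<union> A. w e * rig_row d q e vk) = 0)"

definition indep_lift :: "'v set \<Rightarrow> bool" where
  "indep_lift U \<longleftrightarrow> rows_lin_indep (Suc d) (lift_placement d q U) (E \<union> A)"

lemma finite_E: "finite E"
  using finite_subset[of E "Pow V"] edges finite_V by auto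

lemma edge_card: "e \<in> E \<union> A \<Longrightarrow> card e = 2"
  using edges by blast

lemma edge_doubleton:
  assumes "e \<in> E \<union> A"
  obtains u v where "e = {u, v}" "v \<noteq> u"
  using edge_card[OF assms] unfolding card_2_iff by blast

lemma stress_lincomb:
  assumes "stress w1" "stress w2"
  shows "stress (\<lambda>e. a * w1 e + b * w2 e)"
  unfolding stress_def
proof
  fix vk
  have "(\<Sum>e\<in>E \<union> A. (a * w1 e + b * w2 e) * rig_row d q e vk)
      = a * (\<Sum>e\<in>E \<union> A. w1 e * rig_row d q e vk) + b * (\<Sum>e\<in>E \<union> A. w2 e * rig_row d q e vk)"
    by (simp add: sum.distrib sum_distrib_left algebra_simps)
  then show "(\<Sum>e\<in>E \<union> A. (a * w1 e + b * w2 e) * rig_row d q e vk) = 0"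
    using assms unfolding stress_def by simp
qed

lemma stress_eq_0_if_eq_0_on_A:
  assumes "stress w" "\<forall>e\<in>A. w e = 0"
  shows "\<forall>e\<in>E \<union> A. w e = 0"
proof -
  have "(\<Sum>e\<in>E. w e * rig_row d q e vk) = 0" for vk
  proof -
    have "(\<Sum>e\<in>E \<union> A. w e * rig_row d q e vk)
        = (\<Sum>e\<in>E. w e * rig_row d q e vk) + (\<Sum>e\<in>A. w e * rig_row d q e vk)"
      using disjoint finite_E finite_A by (intro sum.union_disjoint) auto
    then show ?thesis
      using assms unfolding stress_def by simp
  qed
  then have "\<forall>e\<in>E. w e = 0"
    using indep_E unfolding rows_lin_indep_def by blast
  with assms(2) show ?thesis
    by blast
qed

lemma stress_eq_if_eq_on_A:
  assumes "stress w1" "stress w2" "\<forall>e\<in>A. w1 e = w2 e"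
  shows "\<forall>e\<in>E \<union> A. w1 e = w2 e"
  using stress_eq_0_if_eq_0_on_A[OF stress_lincomb[OF assms(1,2), of 1 "-1"]] assms(3) by simp

lemma lifted_dependency_is_stress:
  assumes "\<forall>vk. (\<Sum>e\<in>E \<union> A. c e * rig_row (Suc d) (lift_placement d q U) e vk) = 0"
  shows "stress c"
  unfolding stress_def
proof
  fix vk :: "'v \<times> nat"
  obtain x k where vk: "vk = (x, k)"
    by force
  show "(\<Sum>e\<in>E \<union> A. c e * rig_row d q e vk) = 0"
  proof (cases "k = d")
    case True
    then show ?thesis
      by (simp add: rig_row_def vk)
  next
    case False
    then show ?thesis
      using assms[rule_format, of vk] by (simp add: rig_row_lift_placement vk)
  qed
qed

lemma lifted_dependency_at_vertex:
  assumes "\<forall>vk. (\<Sum>e\<in>E \<union> A. c e * rig_row (Suc d) (lift_placement d q U) e vk) = 0"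
    and "finite U" "x \<notin> U"
  shows "(\<Sum>u\<in>U. if {x, u} \<in> E \<union> A then c {x, u} else 0) = 0"
proof -
  have "0 = (\<Sum>e\<in>E \<union> A. c e * rig_row (Suc d) (lift_placement d q U) e (x, d))"
    using assms(1) by simp
  also have "\<dots> = (\<Sum>e\<in>E \<union> A. - (\<Sum>u\<in>U. if e = {x, u} then c e else 0))"
  proof (rule sum.cong)
    fix e
    assume "e \<in> E \<union> A"
    then show "c e * rig_row (Suc d) (lift_placement d q U) e (x, d)
        = - (\<Sum>u\<in>U. if e = {x, u} then c e else 0)"
      using rig_row_lift_placement_top[OF edge_card assms(2,3)]
      by (auto simp: sum_distrib_left intro!: sum.cong)
  qed simp
  also have "\<dots> = - (\<Sum>u\<in>U. \<Sum>e\<in>E \<union> A. if e = {x, u} then c e else 0)"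
    by (subst sum.swap) (simp add: sum_negf)
  also have "\<dots> = - (\<Sum>u\<in>U. if {x, u} \<in> E \<union> A then c {x, u} else 0)"
    using finite_E finite_A by (simp add: sum.delta')
  finally show ?thesis
    by simp
qed

lemma indep_lift_vertex:
  assumes "\<And>w. stress w \<Longrightarrow> \<forall>e\<in>E \<union> A. u \<in> e \<longrightarrow> w e = 0 \<Longrightarrow> \<forall>e\<in>E \<union> A. w e = 0"
  shows "indep_lift {u}"
  unfolding indep_lift_def rows_lin_indep_def
proof (intro allI impI)
  fix c
  assume dep: "\<forall>vk. (\<Sum>e\<in>E \<union> A. c e * rig_row (Suc d) (lift_placement d q {u}) e vk) = 0"
  have "c e = 0" if e: "e \<in> E \<union> A" "u \<in> e" for e
  proof -
    obtain x where x: "e = {u, x}" "x \<noteq> u"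
      using card_2_obtain_other[OF edge_card[OF e(1)] e(2)] .
    have "(\<Sum>v\<in>{u}. if {x, v} \<in> E \<union> A then c {x, v} else 0) = 0"
      using x(2) by (intro lifted_dependency_at_vertex[OF dep]) auto
    then show ?thesis
      using e(1) x(1) by (simp add: insert_commute)
  qed
  then show "\<forall>e\<in>E \<union> A. c e = 0"
    using assms lifted_dependency_is_stress[OF dep] by blast
qed

lemma indep_lift_common_vertex:
  assumes "\<forall>a\<in>A. u \<in> a"
  shows "indep_lift {u}"
  using assms stress_eq_0_if_eq_0_on_A by (intro indep_lift_vertex) blast

lemma stress_avoiding_vertex:
  assumes "A = {a, b}" "a \<noteq> b" "u \<in> a" "\<not> indep_lift {u}"
  obtains w where "stress w" "w a = 0" "w b = 1" "\<forall>e\<in>E \<union> A. u \<in> e \<longrightarrow> w e = 0"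
proof -
  obtain w where w: "stress w" "\<forall>e\<in>E \<union> A. u \<in> e \<longrightarrow> w e = 0" "\<not> (\<forall>e\<in>E \<union> A. w e = 0)"
    using indep_lift_vertex assms(4) by blast
  have "w a = 0"
    using w(2) assms(1,3) by blast
  moreover have "w b \<noteq> 0"
    using stress_eq_0_if_eq_0_on_A[OF w(1)] w(3) \<open>w a = 0\<close> assms(1) by blast
  moreover have "stress (\<lambda>e. w e / w b)"
    using stress_lincomb[OF w(1) w(1), of "1 / w b" 0] by simp
  ultimately show ?thesis
    using that[of "\<lambda>e. w e / w b"] w(2) by simp
qed

lemma stress_avoiding_edge:
  assumes "A = {a, b}" "a \<noteq> b" "a = {u, v}" "\<not> indep_lift {u}" "\<not> indep_lift {v}"
  obtains w where "stress w" "w a = 0" "w b = 1" "\<forall>e\<in>E \<union> A. u \<in> e \<or> v \<in> e \<longrightarrow> w e = 0"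
proof -
  obtain wu where wu: "stress wu" "wu a = 0" "wu b = 1" "\<forall>e\<in>E \<union> A. u \<in> e \<longrightarrow> wu e = 0"
    using stress_avoiding_vertex[OF assms(1,2) _ assms(4)] assms(3) by blast
  obtain wv where wv: "stress wv" "wv a = 0" "wv b = 1" "\<forall>e\<in>E \<union> A. v \<in> e \<longrightarrow> wv e = 0"
    using stress_avoiding_vertex[OF assms(1,2) _ assms(5)] assms(3) by blast
  have "\<forall>e\<in>A. wu e = wv e"
    using assms(1) wu(2,3) wv(2,3) by simp
  then have "\<forall>e\<in>E \<union> A. wu e = wv e"
    by (rule stress_eq_if_eq_on_A[OF wu(1) wv(1)])
  then show ?thesis
    using that[of wu] wu wv(4) by metis
qed

lemma lifted_dependency_coeff_eq_0:
  assumes dep: "\<forall>vk. (\<Sum>e\<in>E \<union> A. c e * rig_row (Suc d) (lift_placement d q {u1, u2}) e vk) = 0"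
    and A: "A = {a1, a2}" "a1 = {u1, v1}" "v1 \<notin> {u1, u2}" "u1 \<noteq> u2"
    and w1: "stress w1" "w1 a1 = 1" "w1 a2 = 0" "\<forall>e\<in>E \<union> A. u2 \<in> e \<longrightarrow> w1 e = 0"
    and w2: "stress w2" "w2 a1 = 0" "w2 a2 = 1" "\<forall>e\<in>E \<union> A. v1 \<in> e \<longrightarrow> w2 e = 0"
  shows "c a1 = 0"
proof -
  have c_eq: "\<forall>e\<in>E \<union> A. c e = c a1 * w1 e + c a2 * w2 e"
    using stress_eq_if_eq_on_A[OF lifted_dependency_is_stress[OF dep] stress_lincomb[OF w1(1) w2(1)]]
      A(1) w1(2,3) w2(2,3) by simp
  \<comment> \<open>besides a1, the only edge from v1 into {u1, u2} is {v1, u2}, where w1 and w2 both vanish\<close>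
  have "(if {v1, u2} \<in> E \<union> A then c {v1, u2} else 0) = 0"
    using c_eq w1(4) w2(4) by simp
  moreover have "(\<Sum>u\<in>{u1, u2}. if {v1, u} \<in> E \<union> A then c {v1, u} else 0) = 0"
    using A(3) by (intro lifted_dependency_at_vertex[OF dep]) auto
  ultimately show ?thesis
    using A by (simp add: insert_commute)
qed

lemma indep_lift_disjoint_edges:
  assumes "A = {a1, a2}" "a1 \<noteq> a2" "a1 \<inter> a2 = {}"
  shows "\<exists>U. indep_lift U"
proof -
  obtain u1 v1 where a1: "a1 = {u1, v1}" "v1 \<noteq> u1"
    using edge_doubleton assms(1) by blast
  obtain u2 v2 where a2: "a2 = {u2, v2}" "v2 \<noteq> u2"
    using edge_doubleton assms(1) by blast
  show ?thesis
  proof (rule ccontr)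
    assume no_lift: "\<nexists>U. indep_lift U"
    have A': "A = {a2, a1}"
      using assms(1) by blast
    obtain w1 where w1: "stress w1" "w1 a2 = 0" "w1 a1 = 1" "\<forall>e\<in>E \<union> A. u2 \<in> e \<or> v2 \<in> e \<longrightarrow> w1 e = 0"
      using stress_avoiding_edge[OF A' assms(2)[symmetric] a2(1)] no_lift by blast
    obtain w2 where w2: "stress w2" "w2 a1 = 0" "w2 a2 = 1" "\<forall>e\<in>E \<union> A. u1 \<in> e \<or> v1 \<in> e \<longrightarrow> w2 e = 0"
      using stress_avoiding_edge[OF assms(1,2) a1(1)] no_lift by blast
    have distinct: "v1 \<notin> {u1, u2}" "v2 \<notin> {u2, u1}" "u1 \<noteq> u2"
      using assms(3) a1 a2 by auto
    have "indep_lift {u1, u2}"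
      unfolding indep_lift_def rows_lin_indep_def
    proof (intro allI impI)
      fix c
      assume dep: "\<forall>vk. (\<Sum>e\<in>E \<union> A. c e * rig_row (Suc d) (lift_placement d q {u1, u2}) e vk) = 0"
      have "c a1 = 0"
        using lifted_dependency_coeff_eq_0[OF dep assms(1) a1(1) distinct(1,3)] w1 w2 by blast
      moreover have "c a2 = 0"
      proof -
        have "{u2, u1} = {u1, u2}"
          by blast
        with dep have dep': "\<forall>vk. (\<Sum>e\<in>E \<union> A. c e * rig_row (Suc d) (lift_placement d q {u2, u1}) e vk) = 0"
          by simp
        show ?thesis
          using lifted_dependency_coeff_eq_0[OF dep' A' a2(1) distinct(2) distinct(3)[symmetric]] w1 w2
          by blast
      qed
      ultimately show "\<forall>e\<in>E \<union> A. c e = 0"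
        using stress_eq_0_if_eq_0_on_A[OF lifted_dependency_is_stress[OF dep]] assms(1) by blast
    qed
    with no_lift show False
      by blast
  qed
qed

lemma exists_indep_lift:
  assumes "card A \<le> 2"
  shows "\<exists>U. indep_lift U"
proof -
  have "card A = 0 \<or> card A = 1 \<or> card A = 2"
    using assms by linarith
  then consider "A = {}" | a where "A = {a}" | a1 a2 where "A = {a1, a2}" "a1 \<noteq> a2"
    using finite_A by (auto simp: card_1_singleton_iff card_2_iff)
  then show ?thesis
  proof cases
    case 1
    then show ?thesis
      using indep_lift_common_vertex by blast
  next
    case (2 a)
    obtain u v where "a = {u, v}"
      using edge_doubleton 2 by blast
    then show ?thesis
      using indep_lift_common_vertex[of u] 2 by blast
  next
    case (3 a1 a2)
    show ?thesis
    proof (cases "a1 \<inter> a2 = {}")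
      case True
      then show ?thesis
        using indep_lift_disjoint_edges 3 by blast
    next
      case False
      then obtain u where "u \<in> a1" "u \<in> a2"
        by blast
      then show ?thesis
        using indep_lift_common_vertex[of u] 3 by blast
    qed
  qed
qed

end

theorem corollary4p13:
  fixes V :: "'v set" and E A :: "'v set set" and d :: nat
  assumes "d \<ge> 1"
    and "simple_graph V E"
    and "rigidity_indep d V E"
    and "\<forall>e\<in>A. e \<subseteq> V \<and> card e = 2"
    and "A \<inter> E = {}"
    and "finite A" and "card A \<le> 2"
  shows "rigidity_indep (Suc d) V (E \<union> A)"
  unfolding rigidity_indep_def
proof (intro allI impI)
  fix q
  assume generic_q: "generic (Suc d) V q"
  have finite_V: "finite V" and edges: "\<forall>e\<in>E \<union> A. e \<subseteq> V \<and> card e = 2"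
    using assms(2,4) unfolding simple_graph_def by auto
  \<comment> \<open>rig_row d reads only the first d coordinates, so q also serves as the projected placement\<close>
  have "rows_lin_indep d q E"
    using assms(3) generic_Suc_imp_generic[OF finite_V generic_q] unfolding rigidity_indep_def by blast
  then interpret rigidity_extension d V E A q
    using finite_V edges assms(5,6) by unfold_locales
  obtain U where "indep_lift U"
    using exists_indep_lift assms(7) by blast
  then show "rows_lin_indep (Suc d) q (E \<union> A)"
    unfolding indep_lift_def
    using rows_lin_indep_at_generic[OF finite_V _ _ _ generic_q] finite_E finite_A edges by blast
qed

end
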